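(* Let $B$ be a Ferrers board with $n$ columns, padded with columns of height zero on the left so that its root vector $\xi(B)=\langle z_1,\ldots,z_n\rangle$ has only non-negative entries. For each integer $k$ let $v_k$ be the number of entries of $\xi(B)$ equal to $k$, and let $M$ be the greatest integer with $v_M\neq 0$. Then the rook equivalence graph $G(B)$ is connected if and only if, for every $0\le i<M-1$, $v_i>1$ implies $v_{i+1}>1$.
   Context: A Ferrers board is given by a weakly increasing sequence of non-negative integers $B=(b_1,\ldots,b_n)$ of column heights; it is the set of unit cells in the first quadrant lying in column $i$ and rows $1,\ldots,b_i$. Prepending columns of height $0$ on the left does not change the board, and boards are compared using the same number of columns by such padding. A placement of $k$ rooks on $B$ is a set of $k$ cells of $B$ no two in the same row or column; $r_k(B)$ is the number of such placements. Two boards are rook equivalent if they have equal $r_k$ for all $k\ge 0$. The root vector of $B$ is $\xi(B)=\langle 0-b_1,1-b_2,\ldots,(n-1)-b_n\rangle$. The rook equivalence graph $G(B)$ has as vertices all Ferrers boards rook equivalent to $B$, and $\{B_1,B_2\}$ is an edge iff, written with the same number of columns, $B_1$ and $B_2$ differ in exactly two columns $i$ and $j$, where $B_1$ has $k$ more cells than $B_2$ in column $i$ and $k$ fewer cells than $B_2$ in column $j$, for some $k>0$. *)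

theory Defs
  imports Main
begin

text \<open>A Ferrers board is represented by the list of its column heights
  (b_1,...,b_n), weakly increasing.  Lists differing only by leading zero
  columns represent the same board.\<close>

definition ferrers :: "nat list \<Rightarrow> bool" where
  "ferrers b \<longleftrightarrow> sorted b"

definition canonical_board :: "nat list \<Rightarrow> bool" where
  "canonical_board b \<longleftrightarrow> ferrers b \<and> 0 \<notin> set b"

definition cells :: "nat list \<Rightarrow> (nat \<times> nat) set" where
  "cells b = {(i, j). i < length b \<and> 1 \<le> j \<and> j \<le> b ! i}"

definition rook_placement :: "nat list \<Rightarrow> (nat \<times> nat) set \<Rightarrow> bool" where
  "rook_placement b S \<longleftrightarrow> S \<subseteq> cells b \<and>
     (\<forall>p\<in>S. \<forall>q\<in>S. p \<noteq> q \<longrightarrow> fst p \<noteq> fst q \<and> snd p \<noteq> snd q)"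

definition rook_num :: "nat \<Rightarrow> nat list \<Rightarrow> nat" where
  "rook_num k b = card {S. rook_placement b S \<and> card S = k}"

definition rook_equiv :: "nat list \<Rightarrow> nat list \<Rightarrow> bool" where
  "rook_equiv b c \<longleftrightarrow> (\<forall>k. rook_num k b = rook_num k c)"

definition root_vector :: "nat list \<Rightarrow> int list" where
  "root_vector b = map (\<lambda>i. int i - int (b ! i)) [0..<length b]"

definition pad :: "nat \<Rightarrow> nat list \<Rightarrow> nat list" where
  "pad N b = replicate (N - length b) 0 @ b"

definition rook_edge :: "nat list \<Rightarrow> nat list \<Rightarrow> bool" where
  "rook_edge b1 b2 \<longleftrightarrow>
     (let N = max (length b1) (length b2); p1 = pad N b1; p2 = pad N b2 in
      \<exists>i j k. i < N \<and> j < N \<and> i \<noteq> j \<and> k > 0 \<and>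
        p1 ! i = p2 ! i + k \<and> p1 ! j + k = p2 ! j \<and>
        (\<forall>l<N. l \<noteq> i \<and> l \<noteq> j \<longrightarrow> p1 ! l = p2 ! l))"

definition rook_vertices :: "nat list \<Rightarrow> nat list set" where
  "rook_vertices b = {c. canonical_board c \<and> rook_equiv b c}"

definition rook_graph_connected :: "nat list \<Rightarrow> bool" where
  "rook_graph_connected b \<longleftrightarrow>
     (\<forall>c1\<in>rook_vertices b. \<forall>c2\<in>rook_vertices b.
        (\<lambda>x y. x \<in> rook_vertices b \<and> y \<in> rook_vertices b \<and> rook_edge x y)\<^sup>*\<^sup>* c1 c2)"

definition root_count :: "nat list \<Rightarrow> int \<Rightarrow> nat" where
  "root_count b k = length (filter (\<lambda>z. z = k) (root_vector b))"

end

theory Submission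
  imports Defs "HOL-Library.Multiset" "HOL-Computational_Algebra.Polynomial"
begin

text \<open>
  By the factorization theorem of Goldman, Joichi and White,
  \<open>\<Sum>k. r\<^sub>k(B) x(x-1)\<dots>(x-n+k+1) = \<Prod>i<n. (x + b\<^sub>i - i)\<close> (columns counted from 0),
  so boards with the same number of columns are rook equivalent iff their root vectors
  agree as multisets.  For a board whose roots are non-negative, the root vectors of the
  vertices of G(B), padded to n columns, are exactly the root sequences (non-negative,
  starting with 0, increasing by at most 1 per step) with the roots of B as entries, and an
  edge of G(B) is exactly a transposition of two roots: moving k cells between two columns
  keeps the multiset of roots only if the two changed roots are exchanged, as the sum of
  their squares shows.

  If the condition holds, let t be the least repeated root (the largest root if none
  repeats).  Every value from t up to the largest root is then repeated, which allows any
  root sequence to be transposed into one ending in t; deleting t preserves the condition,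
  so induction on the length connects any two root sequences.  If the condition fails at i,
  the unique entry i + 1 of a root sequence is preceded only by values at most i and
  followed by i + 2, so no transposition can move it; yet the sorted sequence and the
  sorted sequence with one copy of i moved to the end carry it at different positions.
\<close>

lemma two_le_count_mset:
  assumes "i \<noteq> j" "i < length xs" "j < length xs" "xs ! i = a" "xs ! j = a"
  shows "2 \<le> count (mset xs) a"
proof -
  have "count (mset xs) a = card {k. k < length xs \<and> a = xs ! k}"
    by (simp add: count_mset count_list_eq_length_filter length_filter_conv_card)
  also have "card {i, j} \<le> \<dots>"
    by (rule card_mono) (use assms in auto)
  finally show ?thesis using assms(1) by simp
qed

lemma two_le_count_mset_obtain:
  assumes "2 \<le> count (mset xs) a"
  obtains i j where "i < j" "j < length xs" "xs ! i = a" "xs ! j = a"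
proof -
  define S where "S = {k. k < length xs \<and> xs ! k = a}"
  have "\<not> card S \<le> Suc 0" using assms unfolding S_def
    by (simp add: count_mset count_list_eq_length_filter length_filter_conv_card eq_commute)
  then obtain i j where ij: "i \<in> S" "j \<in> S" "i \<noteq> j"
    using card_le_Suc0_iff_eq[of S] by (auto simp: S_def)
  show thesis
  proof (cases "i < j")
    case True then show ?thesis using that[of i j] ij unfolding S_def by simp
  next
    case False then show ?thesis using that[of j i] ij unfolding S_def by simp
  qed
qed

lemma sorted_nth_length_filter_less:
  fixes s :: "'a::linorder list"
  assumes "sorted s" "b \<in> set s"
  shows "length (filter (\<lambda>x. x < b) s) < length s \<and> s ! length (filter (\<lambda>x. x < b) s) = b"
  using assms
proof (induction s)
  case (Cons y s)
  show ?case
  proof (cases "y < b")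
    case False
    then have "y = b" "filter (\<lambda>x. x < b) s = []" using Cons.prems by (auto simp: filter_empty_conv)
    then show ?thesis by simp
  qed (use Cons in auto)
qed simp

lemma sorted_le_last:
  assumes "sorted s" "x \<in> set s"
  shows "x \<le> last s"
proof -
  obtain i where i: "i < length s" "s ! i = x" using assms(2) by (metis in_set_conv_nth)
  then have "s \<noteq> []" by auto
  then have "last s = s ! (length s - 1)" by (simp add: last_conv_nth)
  then show ?thesis using sorted_nth_mono[OF assms(1), of i "length s - 1"] i by simp
qed

lemma nth_sort_remove1_snoc:
  fixes z :: "'a::linorder list"
  assumes "a \<in> set z" "b \<in> set z" "a < b"
  defines "c \<equiv> length (filter (\<lambda>x. x < b) z)"
  shows "0 < c" "c < length z" "sort z ! c = b" "(sort (remove1 a z) @ [a]) ! (c - 1) = b"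
proof -
  show "c < length z" "sort z ! c = b"
    using sorted_nth_length_filter_less[of "sort z" b] assms(2) unfolding c_def by (simp_all add: filter_sort)
  have "a \<in> set (filter (\<lambda>x. x < b) z)" using assms(1,3) by simp
  then show "0 < c" unfolding c_def by (rule length_pos_if_in_set)
  have "length (filter (\<lambda>x. x < b) (remove1 a z)) = c - 1"
    using assms(1,3) unfolding c_def by (simp add: filter_remove1 length_remove1)
  then show "(sort (remove1 a z) @ [a]) ! (c - 1) = b"
    using sorted_nth_length_filter_less[of "sort (remove1 a z)" b] assms
    by (auto simp: filter_sort nth_append)
qed

lemma sum_list_list_update:
  fixes xs :: "'a::ab_group_add list"
  shows "k < length xs \<Longrightarrow> sum_list (xs[k := x]) = sum_list xs + x - xs ! k"
  by (induction xs arbitrary: k) (auto split: nat.splits)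

lemma rtranclp_map:
  assumes "\<And>x y. R x y \<Longrightarrow> S (f x) (f y)" and "R\<^sup>*\<^sup>* a b"
  shows "S\<^sup>*\<^sup>* (f a) (f b)"
  using assms(2) by induction (auto intro: rtranclp.rtrancl_into_rtrancl assms(1))

lemma connected_iff_connected_image:
  assumes F: "\<And>x. x \<in> A \<Longrightarrow> F x \<in> B \<and> G (F x) = x" and G: "\<And>y. y \<in> B \<Longrightarrow> G y \<in> A \<and> F (G y) = y"
    and R: "\<And>x y. R x y \<Longrightarrow> x \<in> A \<and> y \<in> A" and S: "\<And>x y. S x y \<Longrightarrow> x \<in> B \<and> y \<in> B"
    and edges: "\<And>x y. x \<in> A \<Longrightarrow> y \<in> A \<Longrightarrow> R x y \<longleftrightarrow> S (F x) (F y)"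
  shows "(\<forall>x\<in>A. \<forall>y\<in>A. R\<^sup>*\<^sup>* x y) \<longleftrightarrow> (\<forall>x\<in>B. \<forall>y\<in>B. S\<^sup>*\<^sup>* x y)"
proof -
  have RS: "S (F x) (F y)" if "R x y" for x y using that R edges by blast
  have SR: "R (G x) (G y)" if "S x y" for x y using that S edges G by metis
  show ?thesis
  proof (intro iffI ballI)
    fix x y assume "\<forall>x\<in>A. \<forall>y\<in>A. R\<^sup>*\<^sup>* x y" "x \<in> B" "y \<in> B"
    then have "S\<^sup>*\<^sup>* (F (G x)) (F (G y))" using G rtranclp_map[of R S F, OF RS] by blast
    then show "S\<^sup>*\<^sup>* x y" using G \<open>x \<in> B\<close> \<open>y \<in> B\<close> by simp
  next
    fix x y assume "\<forall>x\<in>B. \<forall>y\<in>B. S\<^sup>*\<^sup>* x y" "x \<in> A" "y \<in> A"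
    then have "R\<^sup>*\<^sup>* (G (F x)) (G (F y))" using F rtranclp_map[of S R G, OF SR] by blast
    then show "R\<^sup>*\<^sup>* x y" using F \<open>x \<in> A\<close> \<open>y \<in> A\<close> by simp
  qed
qed

section \<open>Root sequences and transpositions\<close>

definition root_seq :: "int list \<Rightarrow> bool" where
  "root_seq z \<longleftrightarrow> (\<forall>x\<in>set z. 0 \<le> x) \<and> (z \<noteq> [] \<longrightarrow> z ! 0 = 0) \<and>
     (\<forall>k. Suc k < length z \<longrightarrow> z ! Suc k \<le> z ! k + 1)"

definition transposed :: "int list \<Rightarrow> int list \<Rightarrow> bool" where
  "transposed x y \<longleftrightarrow>
     (\<exists>i j. i < length x \<and> j < length x \<and> x ! i \<noteq> x ! j \<and> y = x[i := x ! j, j := x ! i])"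

definition root_seqs :: "int multiset \<Rightarrow> int list set" where
  "root_seqs V = {z. root_seq z \<and> mset z = V}"

definition root_swap :: "int multiset \<Rightarrow> int list \<Rightarrow> int list \<Rightarrow> bool" where
  "root_swap V x y \<longleftrightarrow> root_seq x \<and> root_seq y \<and> mset x = V \<and> mset y = V \<and> transposed x y"

definition repeats_propagate :: "int multiset \<Rightarrow> bool" where
  "repeats_propagate V \<longleftrightarrow>
     (\<forall>i. 0 \<le> i \<and> i < Max (set_mset V) - 1 \<longrightarrow> count V i > 1 \<longrightarrow> count V (i + 1) > 1)"

lemma root_seq_nonneg: "root_seq z \<Longrightarrow> x \<in> set z \<Longrightarrow> 0 \<le> x"
  unfolding root_seq_def by blast

lemma root_seq_first: "root_seq z \<Longrightarrow> z \<noteq> [] \<Longrightarrow> z ! 0 = 0"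
  unfolding root_seq_def by blast

lemma root_seq_step: "root_seq z \<Longrightarrow> Suc k < length z \<Longrightarrow> z ! Suc k \<le> z ! k + 1"
  unfolding root_seq_def by blast

lemma root_seq_le_index: "root_seq z \<Longrightarrow> k < length z \<Longrightarrow> z ! k \<le> int k"
  by (induction k) (auto simp: root_seq_first dest: root_seq_step)

lemma root_seq_intermediate_value:
  assumes z: "root_seq z" and "r < length z" "0 \<le> w" "w \<le> z ! r"
  shows "\<exists>s\<le>r. z ! s = w"
  using assms(2,4)
proof (induction r)
  case 0
  then show ?case using root_seq_first[OF z] \<open>0 \<le> w\<close> by auto
next
  case (Suc r)
  show ?case
  proof (cases "z ! Suc r = w")
    case False
    then have "w \<le> z ! r" using root_seq_step[OF z Suc.prems(1)] Suc.prems(2) by auto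
    then show ?thesis using Suc by (auto intro: le_SucI)
  qed auto
qed

lemma root_seq_downward_closed:
  assumes z: "root_seq z" and "v \<in> set z" "0 \<le> w" "w \<le> v"
  shows "w \<in> set z"
proof -
  obtain r where r: "r < length z" "z ! r = v" using assms(2) by (metis in_set_conv_nth)
  then obtain s where "s \<le> r" "z ! s = w" using root_seq_intermediate_value[OF z r(1)] assms(3,4) by auto
  then show ?thesis using r(1) by (metis le_less_trans nth_mem)
qed

lemma root_seq_butlast:
  assumes "root_seq z" shows "root_seq (butlast z)"
  unfolding root_seq_def
proof (intro conjI allI impI ballI)
  show "x \<in> set (butlast z) \<Longrightarrow> 0 \<le> x" for x
    using assms by (auto dest: in_set_butlastD root_seq_nonneg)
  show "butlast z \<noteq> [] \<Longrightarrow> butlast z ! 0 = 0"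
    using assms root_seq_first[of z] by (cases z rule: rev_cases) (auto simp: nth_append)
  show "Suc k < length (butlast z) \<Longrightarrow> butlast z ! Suc k \<le> butlast z ! k + 1" for k
    using assms by (simp add: nth_butlast root_seq_step)
qed

lemma root_seq_snoc:
  assumes "root_seq y" "0 \<le> t" "y \<noteq> [] \<Longrightarrow> t \<le> last y + 1" "y = [] \<Longrightarrow> t = 0"
  shows "root_seq (y @ [t])"
  unfolding root_seq_def
proof (intro conjI allI impI ballI)
  show "x \<in> set (y @ [t]) \<Longrightarrow> 0 \<le> x" for x
    using assms(1,2) by (auto dest: root_seq_nonneg)
  show "(y @ [t]) ! 0 = 0" using assms by (cases y) (auto dest: root_seq_first)
next
  fix k assume k: "Suc k < length (y @ [t])"
  show "(y @ [t]) ! Suc k \<le> (y @ [t]) ! k + 1"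
  proof (cases "Suc k < length y")
    case True then show ?thesis using root_seq_step[OF assms(1)] by (simp add: nth_append)
  next
    case False
    then have "k = length y - 1" "y \<noteq> []" using k by auto
    then show ?thesis using assms(3) by (simp add: nth_append last_conv_nth)
  qed
qed

lemma root_seq_sorted_same_set:
  assumes z: "root_seq z" and s: "sorted s" "set s = set z"
  shows "root_seq s"
  unfolding root_seq_def
proof (intro conjI allI impI)
  show nonneg: "\<forall>x\<in>set s. 0 \<le> x" using s(2) root_seq_nonneg[OF z] by blast
  assume "s \<noteq> []"
  then have "0 \<in> set s" using root_seq_first[OF z] s(2) by (metis length_greater_0_conv nth_mem set_empty)
  then obtain m where "m < length s" "s ! m = 0" by (metis in_set_conv_nth)
  then have "s ! 0 \<le> 0" using s(1) by (metis le0 sorted_nth_mono)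
  then show "s ! 0 = 0" using nonneg \<open>s \<noteq> []\<close> by (meson antisym length_greater_0_conv nth_mem)
next
  fix k assume k: "Suc k < length s"
  show "s ! Suc k \<le> s ! k + 1"
  proof (rule ccontr)
    assume "\<not> ?thesis"
    then have gap: "s ! k + 1 < s ! Suc k" by simp
    have "s ! Suc k \<in> set z" "s ! k \<in> set z" using k s(2) by (metis Suc_lessD nth_mem)+
    then have "s ! k + 1 \<in> set s"
      using root_seq_downward_closed[OF z, of "s ! Suc k" "s ! k + 1"] root_seq_nonneg[OF z, of "s ! k"] gap
      unfolding s(2) by simp
    then obtain m where m: "m < length s" "s ! m = s ! k + 1" by (metis in_set_conv_nth)
    show False
    proof (cases "m \<le> k")
      case True then show False using sorted_nth_mono[OF s(1) True] k m by simp
    next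
      case False then show False using sorted_nth_mono[OF s(1), of "Suc k" m] m gap by simp
    qed
  qed
qed

lemma transposed_sym: "transposed x y \<Longrightarrow> transposed y x"
  unfolding transposed_def
proof (elim exE conjE)
  fix i j assume h: "i < length x" "j < length x" "x ! i \<noteq> x ! j" "y = x[i := x ! j, j := x ! i]"
  then have ij: "i \<noteq> j" by auto
  have yij: "y ! i = x ! j" "y ! j = x ! i" using h ij by (auto simp: nth_list_update)
  have x: "x = y[i := y ! j, j := y ! i]"
    unfolding yij using h ij by (intro nth_equalityI) (auto simp: nth_list_update)
  have "i < length y" "j < length y" "y ! i \<noteq> y ! j" using h(1-4) yij by simp_all
  with x show "\<exists>i j. i < length y \<and> j < length y \<and> y ! i \<noteq> y ! j \<and> x = y[i := y ! j, j := y ! i]"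
    by (intro exI[of _ i] exI[of _ j] conjI)
qed

lemma mset_transposed: "transposed x y \<Longrightarrow> mset y = mset x"
  unfolding transposed_def
proof (elim exE conjE)
  fix i j assume "i < length x" "j < length x" "x ! i \<noteq> x ! j" "y = x[i := x ! j, j := x ! i]"
  then have "y = x[j := x ! i, i := x ! j]" by (metis list_update_swap)
  then show "mset y = mset x" using mset_swap[of i x j] \<open>i < length x\<close> \<open>j < length x\<close> by simp
qed

lemma symp_root_swap: "symp (root_swap V)"
  by (rule sympI) (simp add: root_swap_def transposed_sym)

lemma root_swaps_sym: "(root_swap V)\<^sup>*\<^sup>* x y \<Longrightarrow> (root_swap V)\<^sup>*\<^sup>* y x"
  by (rule sympD[OF symp_rtranclp[OF symp_root_swap]])

section \<open>Connectedness under the propagation condition\<close>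

definition pivot :: "int multiset \<Rightarrow> int \<Rightarrow> bool" where
  "pivot V t \<longleftrightarrow> t \<in># V \<and> (\<forall>j<t. count V j \<le> 1) \<and>
     (\<forall>j. t \<le> j \<and> j < Max (set_mset V) \<longrightarrow> 2 \<le> count V j)"

lemma root_seq_last_ge:
  assumes z: "root_seq z" and "z \<noteq> []" and t: "t \<in> set z" and simple: "\<forall>j<t. count (mset z) j \<le> 1"
  shows "t \<le> last z"
proof (rule ccontr)
  assume "\<not> t \<le> last z"
  define n where "n = length z"
  have last: "last z = z ! (n - 1)" "n - 1 < length z"
    using \<open>z \<noteq> []\<close> unfolding n_def by (auto simp: last_conv_nth)
  obtain r where r: "r < n" "z ! r = t" using t unfolding n_def by (metis in_set_conv_nth)
  have "r \<noteq> n - 1" using r last \<open>\<not> t \<le> last z\<close> by auto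
  then have "r < n - 1" using r(1) by simp
  moreover obtain s where "s \<le> r" "z ! s = last z"
    using root_seq_intermediate_value[OF z, of r "last z"] r \<open>\<not> t \<le> last z\<close> last
      root_seq_nonneg[OF z] by (auto simp: n_def)
  ultimately have "2 \<le> count (mset z) (last z)"
    using two_le_count_mset[of s "n - 1" z] last by simp
  then show False using simple[rule_format, of "last z"] \<open>\<not> t \<le> last z\<close> by simp
qed

lemma root_seq_swap_last:
  assumes z: "root_seq z" and q: "0 < q" "Suc q < length z" "z ! q < last z"
    and fits: "last z \<le> z ! (q - 1) + 1"
  shows "root_seq (z[q := last z, length z - 1 := z ! q])" (is "root_seq ?z'")
proof -
  define m where "m = length z - 1"
  have "z \<noteq> []" using q by auto
  then have e: "last z = z ! m" unfolding m_def by (simp add: last_conv_nth)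
  have len: "length ?z' = length z" and qm: "q < m" using q unfolding m_def by auto
  have z': "?z' ! q = last z" "?z' ! m = z ! q" "\<And>k. k \<noteq> q \<Longrightarrow> k \<noteq> m \<Longrightarrow> ?z' ! k = z ! k"
    using q qm unfolding m_def by auto
  have "Suc (m - 1) = m" "m < length z" using qm \<open>z \<noteq> []\<close> unfolding m_def by auto
  then have before_last: "last z \<le> z ! (m - 1) + 1"
    using root_seq_step[OF z, of "m - 1"] e by simp
  show ?thesis
    unfolding root_seq_def
  proof (intro conjI allI impI ballI)
    have "set ?z' \<subseteq> set z"
      using set_update_subset_insert[of "z[q := last z]" "length z - 1" "z ! q"]
        set_update_subset_insert[of z q "last z"] last_in_set[OF \<open>z \<noteq> []\<close>] q by auto
    then show "0 \<le> x" if "x \<in> set ?z'" for x using that root_seq_nonneg[OF z] by blast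
    show "?z' ! 0 = 0" using z'(3)[of 0] q qm root_seq_first[OF z \<open>z \<noteq> []\<close>] by auto
  next
    fix k assume k: "Suc k < length ?z'"
    then have "Suc k \<le> m" unfolding len m_def by simp
    then consider "Suc k = q" | "k = q" | "Suc k = m" "k \<noteq> q" | "Suc k < m" "Suc k \<noteq> q" "k \<noteq> q"
      using qm by linarith
    then show "?z' ! Suc k \<le> ?z' ! k + 1"
    proof cases
      case 1 then show ?thesis using z' fits qm by auto
    next
      case 2 then show ?thesis using z' root_seq_step[OF z, of q] q(2,3) by (cases "Suc q = m") auto
    next
      case 3
      then have "k = m - 1" by simp
      then show ?thesis using 3 z' q(3) before_last by simp
    next
      case 4 then show ?thesis using z'(3) root_seq_step[OF z, of k] k len by simp
    qed
  qed
qed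

lemma root_swap_lowering_last:
  assumes z: "root_seq z" and "z \<noteq> []" and repeated: "2 \<le> count (mset z) (last z - 1)"
  obtains z' where "root_swap (mset z) z z'" "last z' < last z"
proof -
  define m where "m = length z - 1"
  have last: "last z = z ! m" "m < length z" using \<open>z \<noteq> []\<close> unfolding m_def by (auto simp: last_conv_nth)
  obtain p0 p1 where p: "p0 < p1" "p1 < length z" "z ! p0 = last z - 1" "z ! p1 = last z - 1"
    using two_le_count_mset_obtain[OF repeated] by blast
  have "p1 \<noteq> m" using p last by auto
  then have "p1 < m" using p(2) unfolding m_def by linarith
  \<comment> \<open>The first entry below the last one after position p0 can take its place;
    the copy of last z - 1 at p1 guarantees that it comes before the end.\<close>
  define q where "q = (LEAST q. p0 < q \<and> z ! q < last z)"
  have q: "p0 < q" "z ! q < last z" unfolding q_def by (rule LeastI2[of _ p1]; use p in auto)+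
  have "q \<le> p1" unfolding q_def by (rule Least_le) (use p in auto)
  have fits: "last z \<le> z ! (q - 1) + 1"
  proof (cases "q - 1 = p0")
    case False
    then have "p0 < q - 1" "q - 1 < q" using q by auto
    then show ?thesis using not_less_Least[of "q - 1" "\<lambda>q. p0 < q \<and> z ! q < last z"]
      unfolding q_def[symmetric] by auto
  qed (use p in auto)
  define z' where "z' = z[q := last z, m := z ! q]"
  have root: "root_seq z'"
    unfolding z'_def m_def by (rule root_seq_swap_last) (use z q fits \<open>q \<le> p1\<close> \<open>p1 < m\<close> in \<open>auto simp: m_def\<close>)
  have transp: "transposed z z'"
    unfolding transposed_def z'_def using q \<open>q \<le> p1\<close> \<open>p1 < m\<close> last
    by (intro exI[of _ q] exI[of _ m]) auto
  have "z' \<noteq> []" "length z' = length z" unfolding z'_def using \<open>z \<noteq> []\<close> by auto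
  then have "last z' = z' ! m" unfolding m_def by (simp add: last_conv_nth)
  also have "\<dots> = z ! q" unfolding z'_def using last(2) by simp
  finally have "last z' < last z" using q by simp
  with root transp show thesis using that z mset_transposed unfolding root_swap_def by blast
qed

lemma root_swaps_to_pivot:
  assumes "root_seq z" "z \<noteq> []" "pivot (mset z) t"
  shows "\<exists>z'. (root_swap (mset z))\<^sup>*\<^sup>* z z' \<and> root_seq z' \<and> mset z' = mset z \<and> last z' = t"
  using assms
proof (induction "nat (last z)" arbitrary: z rule: less_induct)
  case less
  show ?case
  proof (cases "last z = t")
    case False
    have t: "t \<in> set z" "\<forall>j<t. count (mset z) j \<le> 1"
      and repeated: "\<forall>j. t \<le> j \<and> j < Max (set z) \<longrightarrow> 2 \<le> count (mset z) j"
      using less.prems(3) unfolding pivot_def by auto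
    have "t \<le> last z" using root_seq_last_ge[OF less.prems(1,2) t] .
    moreover have "last z \<le> Max (set z)" using less.prems(2) by simp
    ultimately have "2 \<le> count (mset z) (last z - 1)" using repeated False by auto
    then obtain z1 where z1: "root_swap (mset z) z z1" "last z1 < last z"
      using root_swap_lowering_last[OF less.prems(1,2)] by blast
    then have z1': "root_seq z1" "mset z1 = mset z" "z1 \<noteq> []"
      using less.prems(2) unfolding root_swap_def by auto
    have "0 \<le> last z1" using root_seq_nonneg[OF z1'(1)] z1'(3) by simp
    then have "nat (last z1) < nat (last z)" using z1(2) by simp
    then obtain z2 where "(root_swap (mset z))\<^sup>*\<^sup>* z1 z2" "root_seq z2" "mset z2 = mset z" "last z2 = t"
      using less.hyps[of z1] z1' less.prems(3) by auto
    then show ?thesis using z1(1) by (auto intro: converse_rtranclp_into_rtranclp)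
  qed (use less.prems in auto)
qed

lemma repeats_propagate_upwards:
  assumes propagate: "repeats_propagate V" and t: "0 \<le> t" "2 \<le> count V t"
    and j: "t \<le> j" "j < Max (set_mset V)"
  shows "2 \<le> count V j"
proof -
  have "2 \<le> count V (t + int d)" if "t + int d < Max (set_mset V)" for d
    using that
  proof (induction d)
    case (Suc d)
    then have "2 \<le> count V (t + int d)" "0 \<le> t + int d" "t + int d < Max (set_mset V) - 1"
      using t(1) by auto
    then have "1 < count V (t + int d + 1)"
      using propagate unfolding repeats_propagate_def by auto
    moreover have shift: "t + int (Suc d) = t + int d + 1" by simp
    ultimately show ?case unfolding shift by linarith
  qed (use t in simp)
  from this[of "nat (j - t)"] show ?thesis using j by simp
qed

lemma repeats_propagate_pivot:
  assumes propagate: "repeats_propagate V" and "V \<noteq> {#}" and nonneg: "\<forall>x\<in>#V. 0 \<le> x"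
  obtains t where "pivot V t"
proof (cases "\<exists>j. 2 \<le> count V j")
  case True
  then obtain j where j: "2 \<le> count V j" by blast
  then have "0 \<le> j" using nonneg by (metis count_eq_zero_iff not_numeral_le_zero)
  define t where "t = int (LEAST k::nat. 2 \<le> count V (int k))"
  have t: "2 \<le> count V t" "0 \<le> t"
    unfolding t_def by (rule LeastI[of _ "nat j"]; use j \<open>0 \<le> j\<close> in simp)+
  have below: "count V i \<le> 1" if "i < t" for i
  proof (cases "0 \<le> i")
    case True
    then have "nat i < nat t" using that by simp
    then show ?thesis using not_less_Least[of "nat i" "\<lambda>k. 2 \<le> count V (int k)"] True
      unfolding t_def by simp
  next
    case False
    then have "i \<notin># V" using nonneg by auto
    then show ?thesis by (simp add: not_in_iff)
  qed
  have "2 \<le> count V j" if "t \<le> j" "j < Max (set_mset V)" for j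
    using repeats_propagate_upwards[OF propagate t(2,1) that] .
  then show thesis using that below t(1) unfolding pivot_def
    by (metis count_eq_zero_iff not_numeral_le_zero)
next
  case False
  then have "count V j \<le> 1" for j using not_le by (metis Suc_1 less_Suc_eq_le)
  moreover have "Max (set_mset V) \<in># V" using \<open>V \<noteq> {#}\<close> by simp
  ultimately have "pivot V (Max (set_mset V))" unfolding pivot_def by auto
  then show thesis using that by blast
qed

lemma repeats_propagate_remove_pivot:
  assumes propagate: "repeats_propagate V" and "pivot V t"
  shows "repeats_propagate (V - {#t#})"
  unfolding repeats_propagate_def
proof (intro allI impI)
  fix i assume i: "0 \<le> i \<and> i < Max (set_mset (V - {#t#})) - 1" and repeated: "1 < count (V - {#t#}) i"
  then have "V - {#t#} \<noteq> {#}" by (metis count_empty not_less_zero)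
  then have "Max (set_mset (V - {#t#})) \<le> Max (set_mset V)"
    by (intro Max_mono) (auto dest: in_diffD)
  moreover have "1 < count V i" using repeated by (auto split: if_splits)
  ultimately have "1 < count V (i + 1)" using propagate i unfolding repeats_propagate_def by auto
  moreover have "i + 1 \<noteq> t" using \<open>pivot V t\<close> \<open>1 < count V i\<close> unfolding pivot_def by auto
  ultimately show "1 < count (V - {#t#}) (i + 1)" by simp
qed

lemma root_swaps_snoc:
  assumes "(root_swap W)\<^sup>*\<^sup>* y1 y2" and snoc: "\<And>y. root_seq y \<Longrightarrow> mset y = W \<Longrightarrow> root_seq (y @ [t])"
  shows "(root_swap (add_mset t W))\<^sup>*\<^sup>* (y1 @ [t]) (y2 @ [t])"
  using assms(1)
proof (induction rule: rtranclp_induct)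
  case (step y z)
  obtain i j where "i < length y" "j < length y" "y ! i \<noteq> y ! j" "z = y[i := y ! j, j := y ! i]"
    using \<open>root_swap W y z\<close> unfolding root_swap_def transposed_def by blast
  then have "transposed (y @ [t]) (z @ [t])"
    unfolding transposed_def
    by (intro exI[of _ i] exI[of _ j]) (auto simp: nth_append list_update_append1)
  then have "root_swap (add_mset t W) (y @ [t]) (z @ [t])"
    using \<open>root_swap W y z\<close> snoc unfolding root_swap_def by auto
  then show ?case using step.IH by simp
qed simp

text \<open>The value t - 1 occurs exactly once in z, so it survives in y and bounds its last entry.\<close>

lemma root_seq_snoc_pivot:
  assumes z: "root_seq z" and t: "pivot (mset z) t"
    and y: "root_seq y" "mset y = mset z - {#t#}"
  shows "root_seq (y @ [t])"
proof -
  have t_in: "t \<in> set z" and simple: "\<forall>j<t. count (mset z) j \<le> 1" using t unfolding pivot_def by auto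
  have "0 \<le> t" using root_seq_nonneg[OF z t_in] .
  show ?thesis
  proof (rule root_seq_snoc[OF y(1) \<open>0 \<le> t\<close>])
    assume "y \<noteq> []"
    show "t \<le> last y + 1"
    proof (cases "t = 0")
      case False
      then have "t - 1 \<in> set z" using root_seq_downward_closed[OF z t_in] \<open>0 \<le> t\<close> by simp
      then have "t - 1 \<in># mset y" using y(2) by (simp add: in_diff_count)
      then have "t - 1 \<in> set y" by simp
      moreover have "\<forall>j<t - 1. count (mset y) j \<le> 1"
        using simple y(2) by auto
      ultimately show ?thesis using root_seq_last_ge[OF y(1) \<open>y \<noteq> []\<close>] by force
    qed (use root_seq_nonneg[OF y(1)] \<open>y \<noteq> []\<close> in simp)
  next
    assume "y = []"
    then have "mset z = {#t#}" using y(2) insert_DiffM[of t "mset z"] t_in by simp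
    then show "t = 0" using root_seq_first[OF z] by (cases z) auto
  qed
qed

theorem root_swaps_connected:
  assumes "repeats_propagate (mset z1)" "root_seq z1" "root_seq z2" "mset z2 = mset z1"
  shows "(root_swap (mset z1))\<^sup>*\<^sup>* z1 z2"
  using assms
proof (induction "length z1" arbitrary: z1 z2)
  case 0
  then show ?case by simp
next
  case (Suc n)
  define V where "V = mset z1"
  have "z1 \<noteq> []" "z2 \<noteq> []" using Suc.hyps(2) Suc.prems(4) by auto
  obtain t where t: "pivot V t"
    using repeats_propagate_pivot[of V] Suc.prems(1) \<open>z1 \<noteq> []\<close> root_seq_nonneg[OF Suc.prems(2)]
    unfolding V_def by auto
  obtain w1 where w1: "(root_swap V)\<^sup>*\<^sup>* z1 w1" "root_seq w1" "mset w1 = V" "last w1 = t"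
    using root_swaps_to_pivot[OF Suc.prems(2) \<open>z1 \<noteq> []\<close>] t unfolding V_def by blast
  obtain w2 where w2: "(root_swap V)\<^sup>*\<^sup>* z2 w2" "root_seq w2" "mset w2 = V" "last w2 = t"
    using root_swaps_to_pivot[OF Suc.prems(3) \<open>z2 \<noteq> []\<close>] t Suc.prems(4) unfolding V_def by auto
  define y1 y2 where "y1 = butlast w1" and "y2 = butlast w2"
  have "w1 \<noteq> []" "w2 \<noteq> []" using w1(3) w2(3) \<open>z1 \<noteq> []\<close> unfolding V_def by auto
  then have w: "w1 = y1 @ [t]" "w2 = y2 @ [t]"
    using w1(4) w2(4) append_butlast_last_id unfolding y1_def y2_def by metis+
  then have my: "mset y1 = V - {#t#}" "mset y2 = mset y1" using w1(3) w2(3) by auto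
  have y: "root_seq y1" "root_seq y2" unfolding y1_def y2_def using w1(2) w2(2) by (simp_all add: root_seq_butlast)
  have "length y1 = n" using Suc.hyps(2) w(1) w1(3) unfolding V_def by (metis size_mset length_append_singleton nat.inject)
  moreover have "repeats_propagate (mset y1)"
    unfolding my using repeats_propagate_remove_pivot Suc.prems(1) t unfolding V_def by blast
  ultimately have "(root_swap (mset y1))\<^sup>*\<^sup>* y1 y2" using Suc.hyps(1) y my(2) by blast
  moreover have "root_seq (y @ [t])" if "root_seq y" "mset y = mset y1" for y
    using root_seq_snoc_pivot[OF Suc.prems(2)] t that my(1) unfolding V_def by simp
  ultimately have "(root_swap (add_mset t (mset y1)))\<^sup>*\<^sup>* w1 w2"
    unfolding w by (rule root_swaps_snoc)
  moreover have "add_mset t (mset y1) = V" using my(1) w1(3) w(1) by simp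
  ultimately have "(root_swap V)\<^sup>*\<^sup>* w1 w2" by simp
  then show ?case
    using w1(1) root_swaps_sym[OF w2(1)] unfolding V_def by (meson rtranclp_trans)
qed

section \<open>Disconnectedness when the propagation condition fails\<close>

lemma unique_entry_neighbourhood:
  assumes z: "root_seq z" and p: "p < length z" "z ! p = a + 1"
    and unique: "count (mset z) (a + 1) = 1" and larger: "x \<in> set z" "a + 2 \<le> x" and "0 \<le> a"
  shows "(\<forall>r<p. z ! r \<le> a) \<and> Suc p < length z \<and> z ! Suc p = a + 2"
proof -
  have at_p: "r = p" if "r < length z" "z ! r = a + 1" for r
    using two_le_count_mset[of r p z "a + 1"] that p unique by fastforce
  define r where "r = (LEAST r. r < length z \<and> a + 2 \<le> z ! r)"
  obtain r0 where r0: "r0 < length z" "z ! r0 = x" using larger(1) by (metis in_set_conv_nth)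
  have "r < length z \<and> a + 2 \<le> z ! r"
    unfolding r_def by (rule LeastI[of _ r0]) (use r0 larger in simp)
  then have r: "r < length z" "a + 2 \<le> z ! r" by auto
  have below_r: "z ! s < a + 2" if "s < r" for s
  proof -
    have "\<not> (s < length z \<and> a + 2 \<le> z ! s)"
      using not_less_Least[of s "\<lambda>r. r < length z \<and> a + 2 \<le> z ! r"] that unfolding r_def[symmetric] .
    then show ?thesis using that r(1) by simp
  qed
  obtain s where "s \<le> r" "z ! s = a + 1"
    using root_seq_intermediate_value[OF z r(1), of "a + 1"] r(2) \<open>0 \<le> a\<close> by auto
  moreover have "s \<noteq> r" using r(2) \<open>z ! s = a + 1\<close> by auto
  ultimately have "p < r" using at_p[of s] r(1) by simp
  then have r1: "Suc (r - 1) = r" "r - 1 < r" by auto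
  then have "a + 1 \<le> z ! (r - 1)" using root_seq_step[OF z, of "r - 1"] r by simp
  then have "z ! (r - 1) = a + 1" using below_r[OF r1(2)] by simp
  then have "r = Suc p" using at_p[of "r - 1"] r1 r(1) by simp
  moreover have "z ! r' \<le> a" if "r' < p" for r'
  proof -
    have "r' \<noteq> p" "r' < length z" using that p(1) by auto
    then show ?thesis using below_r[of r'] at_p[of r'] that \<open>p < r\<close> by fastforce
  qed
  moreover have "z ! Suc p \<le> a + 2" using root_seq_step[OF z, of p] p(2) r(1) \<open>r = Suc p\<close> by simp
  ultimately show ?thesis using r by auto
qed

lemma unique_entry_not_transposed:
  assumes z: "root_seq z" "root_seq z'" "mset z' = mset z"
    and qq: "q \<noteq> q'" "q < length z" "q' < length z" and zq: "z ! q = a + 1"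
    and z': "z' = z[q := z ! q', q' := a + 1]" and unique: "count (mset z) (a + 1) = 1"
    and larger: "x \<in> set z" "a + 2 \<le> x" and "0 \<le> a"
  shows False
proof -
  have z'q': "z' ! q' = a + 1" and z'q: "z' ! q = z ! q'" and z'k: "\<And>k. k \<noteq> q \<Longrightarrow> k \<noteq> q' \<Longrightarrow> z' ! k = z ! k"
    using z' qq by auto
  have A: "(\<forall>r<q. z ! r \<le> a) \<and> Suc q < length z \<and> z ! Suc q = a + 2"
    by (rule unique_entry_neighbourhood[OF z(1) qq(2) zq unique larger \<open>0 \<le> a\<close>])
  have B: "(\<forall>r<q'. z' ! r \<le> a) \<and> Suc q' < length z' \<and> z' ! Suc q' = a + 2"
    by (rule unique_entry_neighbourhood[OF z(2) _ z'q' _ _ larger(2) \<open>0 \<le> a\<close>])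
      (use qq z' z(3) unique larger(1) in \<open>auto dest: arg_cong[of _ _ set_mset]\<close>)
  show False
  proof (cases "q' < q")
    case True
    then have "z' ! Suc q' \<le> a"
      using A z'q z'k[of "Suc q'"] by (cases "Suc q' = q") auto
    then show False using B by simp
  next
    case False
    then have "q < q'" using qq by auto
    then have "z' ! q \<le> a" using B by auto
    moreover have "Suc q = q' \<or> z' ! Suc q \<le> a" using B \<open>q < q'\<close> by (metis Suc_lessI)
    ultimately show False using A z'q z'k[of "Suc q"] \<open>q < q'\<close> by (cases "Suc q = q'") auto
  qed
qed

lemma root_swap_fixes_unique_entry:
  assumes swap: "root_swap V z z'" and q: "q < length z" "z ! q = a + 1" and unique: "count V (a + 1) = 1"
    and larger: "x \<in># V" "a + 2 \<le> x" and "0 \<le> a"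
  shows "z' ! q = a + 1"
proof -
  have z: "root_seq z" "root_seq z'" "mset z = V" "mset z' = V" using swap unfolding root_swap_def by auto
  obtain i j where ij: "i < length z" "j < length z" "z ! i \<noteq> z ! j" "z' = z[i := z ! j, j := z ! i]"
    using swap unfolding root_swap_def transposed_def by blast
  have unique': "count (mset z) (a + 1) = 1" and larger': "x \<in> set z" using unique larger z(3) by auto
  consider "q \<noteq> i" "q \<noteq> j" | "q = i" | "q = j" by blast
  then show ?thesis
  proof cases
    case 2
    then have "z' = z[q := z ! j, j := a + 1]" "q \<noteq> j" using ij q by auto
    then show ?thesis
      using unique_entry_not_transposed[OF z(1,2) _ _ q(1) ij(2) q(2) _ unique' larger' larger(2) \<open>0 \<le> a\<close>] z
      by auto
  next
    case 3
    then have "q \<noteq> i" using ij(3) q(2) by auto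
    moreover have "z' = z[q := z ! i, i := a + 1]" using 3 ij(4) q(2) \<open>q \<noteq> i\<close> by (simp add: list_update_swap)
    ultimately show ?thesis
      using unique_entry_not_transposed[OF z(1,2) _ _ q(1) ij(1) q(2) _ unique' larger' larger(2) \<open>0 \<le> a\<close>] z
      by auto
  qed (use ij q in simp)
qed

lemma root_swaps_fix_unique_entry:
  assumes "(root_swap V)\<^sup>*\<^sup>* z z'" "q < length z" "z ! q = a + 1" "count V (a + 1) = 1"
    "x \<in># V" "a + 2 \<le> x" "0 \<le> a"
  shows "z' ! q = a + 1"
  using assms(1)
proof (induction rule: rtranclp_induct)
  case (step y z')
  have "length y = length z"
    using step.hyps(1) by (induction rule: rtranclp_induct) (auto simp: root_swap_def dest: mset_transposed mset_eq_length)
  then show ?case using root_swap_fixes_unique_entry[OF step.hyps(2)] step.IH assms(2-7) by simp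
qed (use assms in simp)

lemma root_seq_sort_remove1_snoc:
  assumes z: "root_seq z" and repeated: "2 \<le> count (mset z) a"
  shows "root_seq (sort (remove1 a z) @ [a])"
proof -
  have "a \<in> set z" using repeated by (metis count_mset_0_iff not_numeral_le_zero)
  have "x \<in># mset z - {#a#} \<longleftrightarrow> x \<in># mset z" for x
    using repeated \<open>a \<in> set z\<close> by (auto simp: in_diff_count)
  then have "set_mset (mset (remove1 a z)) = set_mset (mset z)" by auto
  then have set: "set (sort (remove1 a z)) = set z" by (simp only: set_mset_mset set_sort)
  then have root: "root_seq (sort (remove1 a z))" using root_seq_sorted_same_set[OF z] by simp
  have "a \<le> last (sort (remove1 a z))"
    using sorted_le_last[of "sort (remove1 a z)" a] \<open>a \<in> set z\<close> unfolding set by simp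
  moreover have "sort (remove1 a z) \<noteq> []" using set \<open>a \<in> set z\<close> by (metis empty_iff set_empty)
  ultimately show ?thesis
    using root_seq_snoc[OF root root_seq_nonneg[OF z \<open>a \<in> set z\<close>]] by simp
qed

theorem root_swaps_disconnected:
  assumes z: "root_seq z" and a: "0 \<le> a" "a < Max (set z) - 1"
    and repeated: "1 < count (mset z) a" and not_repeated: "\<not> 1 < count (mset z) (a + 1)"
  obtains z1 z2 where "z1 \<in> root_seqs (mset z)" "z2 \<in> root_seqs (mset z)" "\<not> (root_swap (mset z))\<^sup>*\<^sup>* z1 z2"
proof -
  have "a \<in> set z" using repeated by (metis count_mset_0_iff not_one_less_zero)
  then have "Max (set z) \<in> set z" by (metis Max_in empty_iff finite_set)
  then have "a + 1 \<in> set z" "a + 2 \<le> Max (set z)"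
    using root_seq_downward_closed[OF z, of "Max (set z)" "a + 1"] a by auto
  then have unique: "count (mset z) (a + 1) = 1" using not_repeated by (simp add: Suc_leI le_antisym)
  define z1 z2 where "z1 = sort z" and "z2 = sort (remove1 a z) @ [a]"
  have roots: "z1 \<in> root_seqs (mset z)" "z2 \<in> root_seqs (mset z)"
    using root_seq_sorted_same_set[OF z] root_seq_sort_remove1_snoc[OF z] repeated \<open>a \<in> set z\<close>
    unfolding z1_def z2_def root_seqs_def by auto
  define c where "c = length (filter (\<lambda>x. x < a + 1) z)"
  have c: "0 < c" "c < length z" "z1 ! c = a + 1" "z2 ! (c - 1) = a + 1"
    using nth_sort_remove1_snoc[OF \<open>a \<in> set z\<close> \<open>a + 1 \<in> set z\<close>] unfolding c_def z1_def z2_def by simp_all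
  have "length z1 = length z" "length z2 = length z"
    unfolding z1_def z2_def using length_pos_if_in_set[OF \<open>a \<in> set z\<close>] \<open>a \<in> set z\<close>
    by (simp_all add: length_remove1)
  have "z2 ! c \<noteq> a + 1"
  proof
    assume "z2 ! c = a + 1"
    moreover have "c \<noteq> c - 1" "c < length z2" "c - 1 < length z2" using c \<open>length z2 = length z\<close> by auto
    ultimately have "2 \<le> count (mset z2) (a + 1)" using two_le_count_mset[of c "c - 1" z2 "a + 1"] c(4) by blast
    then show False using unique roots unfolding root_seqs_def by simp
  qed
  moreover have "z2 ! c = a + 1" if "(root_swap (mset z))\<^sup>*\<^sup>* z1 z2"
    using root_swaps_fix_unique_entry[OF that, of c a "Max (set z)"] c(2,3) \<open>length z1 = length z\<close> unique
      \<open>Max (set z) \<in> set z\<close> \<open>a + 2 \<le> Max (set z)\<close> a(1) by simp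
  ultimately show thesis using that roots by blast
qed

theorem root_swaps_connected_iff:
  assumes "root_seq z"
  shows "(\<forall>z1\<in>root_seqs (mset z). \<forall>z2\<in>root_seqs (mset z). (root_swap (mset z))\<^sup>*\<^sup>* z1 z2) \<longleftrightarrow>
    repeats_propagate (mset z)"
proof
  assume conn: "\<forall>z1\<in>root_seqs (mset z). \<forall>z2\<in>root_seqs (mset z). (root_swap (mset z))\<^sup>*\<^sup>* z1 z2"
  show "repeats_propagate (mset z)"
    unfolding repeats_propagate_def
  proof (intro allI impI; rule ccontr)
    fix i assume "0 \<le> i \<and> i < Max (set_mset (mset z)) - 1" "1 < count (mset z) i" "\<not> 1 < count (mset z) (i + 1)"
    then show False using root_swaps_disconnected[OF assms, of i] conn by auto
  qed
next
  assume "repeats_propagate (mset z)"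
  show "\<forall>z1\<in>root_seqs (mset z). \<forall>z2\<in>root_seqs (mset z). (root_swap (mset z))\<^sup>*\<^sup>* z1 z2"
  proof (intro ballI)
    fix z1 z2 assume "z1 \<in> root_seqs (mset z)" "z2 \<in> root_seqs (mset z)"
    then show "(root_swap (mset z))\<^sup>*\<^sup>* z1 z2"
      using root_swaps_connected[of z1 z2] \<open>repeats_propagate (mset z)\<close> unfolding root_seqs_def by simp
  qed
qed

section \<open>The factorization theorem\<close>

definition placements :: "nat list \<Rightarrow> nat \<Rightarrow> (nat \<times> nat) set set" where
  "placements b k = {S. rook_placement b S \<and> card S = k}"

lemma rook_num_placements: "rook_num k b = card (placements b k)"
  unfolding rook_num_def placements_def ..

lemma finite_cells: "finite (cells b)"
proof (rule finite_subset)
  show "cells b \<subseteq> {..<length b} \<times> {..sum_list b}"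
    unfolding cells_def by (auto intro: order_trans[OF _ elem_le_sum_list])
qed auto

lemma rook_placement_finite: "rook_placement b S \<Longrightarrow> finite S"
  unfolding rook_placement_def using finite_cells finite_subset by blast

lemma finite_placements: "finite (placements b k)"
  by (rule finite_subset[of _ "Pow (cells b)"]) (auto simp: placements_def rook_placement_def finite_cells)

lemma rook_placement_inj_on:
  assumes "rook_placement b S"
  shows "inj_on fst S" "inj_on snd S"
  using assms unfolding rook_placement_def inj_on_def by blast+

lemma rook_num_0: "rook_num 0 b = 1"
proof -
  have "placements b 0 = {{}}"
    unfolding placements_def using rook_placement_finite by (auto simp: rook_placement_def)
  then show ?thesis by (simp add: rook_num_placements)
qed

lemma rook_num_gt_length: "length b < k \<Longrightarrow> rook_num k b = 0"
proof -
  have "card S \<le> length b" if "rook_placement b S" for S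
  proof -
    have "card S = card (fst ` S)" using rook_placement_inj_on[OF that] by (simp add: card_image)
    also have "\<dots> \<le> card {..<length b}"
      using that unfolding rook_placement_def cells_def by (intro card_mono) auto
    finally show ?thesis by simp
  qed
  moreover assume "length b < k"
  ultimately have "placements b k = {}" unfolding placements_def by fastforce
  then show ?thesis by (simp add: rook_num_placements)
qed

lemma cells_Cons_0: "cells (0 # b) = (\<lambda>(i, j). (Suc i, j)) ` cells b"
proof (intro set_eqI iffI)
  fix p assume "p \<in> cells (0 # b)"
  then obtain i j where "p = (Suc i, j)" "(i, j) \<in> cells b"
    unfolding cells_def by (cases p) (auto simp: nth_Cons split: nat.splits)
  then show "p \<in> (\<lambda>(i, j). (Suc i, j)) ` cells b" by force
qed (auto simp: cells_def)

lemma rook_num_Cons_0: "rook_num k (0 # b) = rook_num k b"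
proof -
  define f where "f = (\<lambda>(i::nat, j::nat). (Suc i, j))"
  have "inj f" unfolding f_def inj_def by auto
  have f: "fst (f p) = Suc (fst p)" "snd (f p) = snd p" for p by (auto simp: f_def split: prod.splits)
  have placement: "rook_placement (0 # b) (f ` S) \<longleftrightarrow> rook_placement b S" for S
    unfolding rook_placement_def cells_Cons_0 f_def[symmetric]
    using \<open>inj f\<close> by (simp add: inj_image_subset_iff f inj_eq)
  have "placements (0 # b) k = image f ` placements b k"
  proof (rule set_eqI)
    fix S'
    show "S' \<in> placements (0 # b) k \<longleftrightarrow> S' \<in> image f ` placements b k"
    proof
      assume S': "S' \<in> placements (0 # b) k"
      then obtain S where "S' = f ` S" "S \<subseteq> cells b"
        unfolding placements_def rook_placement_def cells_Cons_0 f_def by (auto simp: subset_image_iff)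
      then show "S' \<in> image f ` placements b k"
        using S' placement \<open>inj f\<close> unfolding placements_def
        by (auto simp: card_image inj_on_subset)
    qed (use placement \<open>inj f\<close> in \<open>auto simp: placements_def card_image inj_on_subset\<close>)
  qed
  moreover have "inj_on (image f) (placements b k)"
    using \<open>inj f\<close> by (meson inj_on_image inj_on_subset subset_UNIV)
  ultimately show ?thesis by (simp add: rook_num_placements card_image)
qed

lemma rook_num_replicate_0: "rook_num k (replicate m 0 @ b) = rook_num k b"
  by (induction m) (simp_all add: rook_num_Cons_0)

lemma rook_equiv_pad: "rook_equiv (pad N b) (pad N c) \<longleftrightarrow> rook_equiv b c"
  unfolding rook_equiv_def pad_def by (simp add: rook_num_replicate_0)

lemma cells_snoc: "cells (b @ [h]) = cells b \<union> {(length b, j) | j. 1 \<le> j \<and> j \<le> h}"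
  unfolding cells_def by (auto simp: nth_append less_Suc_eq)

lemma rook_placement_rows:
  assumes "rook_placement b S" "\<forall>x\<in>set b. x \<le> h"
  shows "snd ` S \<subseteq> {1..h}" "card (snd ` S) = card S"
proof
  fix j assume "j \<in> snd ` S"
  then obtain i where "(i, j) \<in> S" by auto
  then have "i < length b" "1 \<le> j" "j \<le> b ! i" using assms(1) unfolding rook_placement_def cells_def by auto
  then show "j \<in> {1..h}" using assms(2) nth_mem by fastforce
next
  show "card (snd ` S) = card S" using rook_placement_inj_on[OF assms(1)] by (simp add: card_image)
qed

lemma placements_avoiding_last_column:
  "{S \<in> placements (b @ [h]) k. \<forall>p\<in>S. fst p \<noteq> length b} = placements b k"
proof -
  have "S \<subseteq> cells (b @ [h]) \<and> (\<forall>p\<in>S. fst p \<noteq> length b) \<longleftrightarrow> S \<subseteq> cells b" for S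
    unfolding cells_snoc by (fastforce simp: cells_def)
  then show ?thesis unfolding placements_def rook_placement_def by blast
qed

lemma placements_using_last_column:
  assumes "\<forall>x\<in>set b. x \<le> h"
  shows "{S \<in> placements (b @ [h]) (Suc k). \<exists>p\<in>S. fst p = length b} =
    (\<lambda>(S, j). insert (length b, j) S) ` (SIGMA S:placements b k. {1..h} - snd ` S)"
    (is "?B = ?g ` ?Sig")
proof (intro equalityI subsetI)
  fix S assume "S \<in> ?B"
  then have S: "rook_placement (b @ [h]) S" "card S = Suc k" and "\<exists>p\<in>S. fst p = length b"
    unfolding placements_def by auto
  then obtain j where j: "(length b, j) \<in> S" by (metis prod.collapse)
  define S0 where "S0 = S - {(length b, j)}"
  have distinct: "\<forall>p\<in>S. \<forall>q\<in>S. p \<noteq> q \<longrightarrow> fst p \<noteq> fst q \<and> snd p \<noteq> snd q"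
    using S(1) unfolding rook_placement_def by auto
  have "S0 \<subseteq> cells b"
    using S(1) distinct j unfolding S0_def rook_placement_def cells_snoc by fastforce
  then have "S0 \<in> placements b k"
    using S distinct j rook_placement_finite[OF S(1)] unfolding placements_def rook_placement_def S0_def
    by auto
  moreover have "j \<in> {1..h}" using j S(1) unfolding rook_placement_def cells_def by (auto simp: nth_append)
  moreover have "j \<notin> snd ` S0" using distinct j unfolding S0_def by force
  moreover have "S = insert (length b, j) S0" using j unfolding S0_def by auto
  ultimately show "S \<in> ?g ` ?Sig" by force
next
  fix S assume "S \<in> ?g ` ?Sig"
  then obtain S0 j where S0: "S0 \<in> placements b k" "j \<in> {1..h}" "j \<notin> snd ` S0"
    and S: "S = insert (length b, j) S0" by auto
  have p0: "rook_placement b S0" "card S0 = k" using S0(1) unfolding placements_def by auto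
  have "\<forall>p\<in>S0. fst p < length b" using p0(1) unfolding rook_placement_def cells_def by auto
  then have off: "(length b, j) \<notin> S0" "\<forall>p\<in>S0. fst p \<noteq> length b" by auto
  have "S \<subseteq> cells (b @ [h])"
    using p0(1) S0(2) unfolding S rook_placement_def cells_snoc by auto
  moreover have "\<forall>p\<in>S. \<forall>q\<in>S. p \<noteq> q \<longrightarrow> fst p \<noteq> fst q \<and> snd p \<noteq> snd q"
    using p0(1) S0(3) off(2) unfolding S rook_placement_def by (auto simp: image_iff)
  moreover have "card S = Suc k" using rook_placement_finite[OF p0(1)] off(1) p0(2) unfolding S by simp
  moreover have "(length b, j) \<in> S" unfolding S by simp
  ultimately show "S \<in> ?B" unfolding placements_def rook_placement_def by force
qed

lemma card_placements_using_last_column: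
  assumes h: "\<forall>x\<in>set b. x \<le> h"
  shows "card {S \<in> placements (b @ [h]) (Suc k). \<exists>p\<in>S. fst p = length b} = card (placements b k) * (h - k)"
proof -
  let ?g = "\<lambda>(S, j). insert (length b, j) S" and ?Sig = "SIGMA S:placements b k. {1..h} - snd ` S"
  have off_last: "\<forall>p\<in>S. fst p < length b" if "S \<in> placements b k" for S
    using that unfolding placements_def rook_placement_def cells_def by auto
  have "inj_on ?g ?Sig"
  proof (rule inj_onI)
    fix x y assume x: "x \<in> ?Sig" and y: "y \<in> ?Sig" and eq: "?g x = ?g y"
    obtain S j S' j' where xy: "x = (S, j)" "y = (S', j')" by (cases x, cases y)
    have off: "\<forall>p\<in>S. fst p < length b" "\<forall>p\<in>S'. fst p < length b"
      using x y off_last unfolding xy by auto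
    have eq': "insert (length b, j) S = insert (length b, j') S'" using eq unfolding xy by simp
    then have "(length b, j) \<in> insert (length b, j') S'" by blast
    then have "j = j'" using off by auto
    have "S = insert (length b, j) S - {(length b, j)}" using off by auto
    also have "\<dots> = S'" using eq' off \<open>j = j'\<close> by auto
    finally show "x = y" unfolding xy using \<open>j = j'\<close> by simp
  qed
  then have "card (?g ` ?Sig) = card ?Sig" by (rule card_image)
  also have "\<dots> = (\<Sum>S\<in>placements b k. card ({1..h} - snd ` S))"
    by (rule card_SigmaI) (auto simp: finite_placements)
  also have "\<dots> = (\<Sum>S\<in>placements b k. h - k)"
  proof (rule sum.cong)
    fix S assume "S \<in> placements b k"
    then have "rook_placement b S" "card S = k" by (auto simp: placements_def)
    then show "card ({1..h} - snd ` S) = h - k"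
      using rook_placement_rows[OF _ h] by (simp add: card_Diff_subset finite_subset[of _ "{1..h}"])
  qed simp
  finally show ?thesis using placements_using_last_column[OF h] by simp
qed

lemma rook_num_snoc:
  assumes h: "\<forall>x\<in>set b. x \<le> h"
  shows "int (rook_num (Suc k) (b @ [h])) = int (rook_num (Suc k) b) + (int h - int k) * int (rook_num k b)"
proof -
  let ?P = "placements (b @ [h]) (Suc k)"
  let ?A = "{S \<in> ?P. \<forall>p\<in>S. fst p \<noteq> length b}" and ?B = "{S \<in> ?P. \<exists>p\<in>S. fst p = length b}"
  have "finite ?A" "finite ?B" "?A \<inter> ?B = {}" using finite_placements by auto
  then have "card (?A \<union> ?B) = card ?A + card ?B" by (rule card_Un_disjoint)
  moreover have "?A \<union> ?B = ?P" by blast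
  ultimately have "card ?P = card ?A + card ?B" by simp
  then have eq: "rook_num (Suc k) (b @ [h]) = rook_num (Suc k) b + rook_num k b * (h - k)"
    unfolding rook_num_placements placements_avoiding_last_column card_placements_using_last_column[OF h] .
  show ?thesis
  proof (cases "k \<le> h")
    case True then show ?thesis using eq by (simp add: of_nat_diff)
  next
    case False
    have "placements b k = {}"
    proof (rule equals0I)
      fix S
      assume "S \<in> placements b k"
      then have "rook_placement b S" "card S = k" by (auto simp: placements_def)
      then have "k \<le> card {1..h}"
        using rook_placement_rows[OF _ h] card_mono[of "{1..h}" "snd ` S"] by simp
      then show False using False by simp
    qed
    then show ?thesis using eq False by (simp add: rook_num_placements)
  qed
qed

definition falling :: "int \<Rightarrow> nat \<Rightarrow> int" where
  "falling x m = (\<Prod>l<m. x - int l)"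

definition rook_falling_sum :: "nat list \<Rightarrow> int \<Rightarrow> int" where
  "rook_falling_sum b x = (\<Sum>k\<le>length b. int (rook_num k b) * falling x (length b - k))"

lemma falling_Suc: "falling x (Suc m) = falling x m * (x - int m)"
  unfolding falling_def by simp

lemma falling_eq_0: "j < m \<Longrightarrow> falling (int j) m = 0"
  unfolding falling_def by (rule prod_zero) auto

lemma falling_neq_0: "falling (int j) j \<noteq> 0"
  unfolding falling_def by (simp add: prod_zero_iff)

lemma rook_falling_sum_snoc:
  assumes h: "\<forall>y\<in>set b. y \<le> h"
  shows "rook_falling_sum (b @ [h]) x = rook_falling_sum b x * (x + int h - int (length b))"
proof -
  define n where "n = length b"
  define r where "r k = int (rook_num k b)" for k
  have "r (Suc n) = 0" unfolding r_def n_def by (simp add: rook_num_gt_length)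
  have shift: "(\<Sum>k\<le>Suc n. f k) = f 0 + (\<Sum>k\<le>n. f (Suc k))" for f :: "nat \<Rightarrow> int"
    by (rule sum.atMost_Suc_shift)
  have "rook_falling_sum (b @ [h]) x = (\<Sum>k\<le>Suc n. int (rook_num k (b @ [h])) * falling x (Suc n - k))"
    unfolding rook_falling_sum_def n_def by simp
  also have "\<dots> = falling x (Suc n) + (\<Sum>k\<le>n. int (rook_num (Suc k) (b @ [h])) * falling x (n - k))"
    unfolding shift by (simp add: rook_num_0)
  also have "\<dots> = falling x (Suc n) + (\<Sum>k\<le>n. (r (Suc k) + (int h - int k) * r k) * falling x (n - k))"
    unfolding r_def rook_num_snoc[OF h] ..
  also have "\<dots> = (\<Sum>k\<le>Suc n. r k * falling x (Suc n - k)) + (\<Sum>k\<le>n. (int h - int k) * r k * falling x (n - k))"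
    unfolding shift by (simp add: r_def rook_num_0 distrib_right sum.distrib)
  also have "(\<Sum>k\<le>Suc n. r k * falling x (Suc n - k)) = (\<Sum>k\<le>n. r k * falling x (n - k) * (x - int (n - k)))"
    using \<open>r (Suc n) = 0\<close> by (auto intro!: sum.cong simp: Suc_diff_le falling_Suc)
  also have "\<dots> + (\<Sum>k\<le>n. (int h - int k) * r k * falling x (n - k)) =
      (\<Sum>k\<le>n. r k * falling x (n - k)) * (x + int h - int n)"
    unfolding sum.distrib[symmetric] sum_distrib_right
    by (rule sum.cong) (auto simp: algebra_simps of_nat_diff)
  finally show ?thesis unfolding rook_falling_sum_def r_def n_def .
qed

theorem rook_factorization:
  "sorted b \<Longrightarrow> rook_falling_sum b x = (\<Prod>i<length b. x + int (b ! i) - int i)"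
proof (induction b rule: rev_induct)
  case Nil
  then show ?case unfolding rook_falling_sum_def falling_def by (simp add: rook_num_0)
next
  case (snoc h b)
  then have "sorted b" "\<forall>y\<in>set b. y \<le> h" by (auto simp: sorted_append)
  then show ?case using snoc.IH by (simp add: rook_falling_sum_snoc nth_append)
qed

lemma rook_factorization_root_vector:
  "sorted b \<Longrightarrow> rook_falling_sum b x = (\<Prod>z\<in>#mset (root_vector b). x - z)"
proof -
  assume "sorted b"
  have "(\<Prod>z\<in>#mset (root_vector b). x - z) = prod_list (map (\<lambda>z. x - z) (root_vector b))"
    by (simp add: prod_mset_prod_list mset_map[symmetric] del: mset_map)
  also have "\<dots> = prod_list (map (\<lambda>i. x + int (b ! i) - int i) [0..<length b])"
    unfolding root_vector_def by (simp add: o_def algebra_simps)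
  also have "\<dots> = (\<Prod>i<length b. x + int (b ! i) - int i)"
    by (simp add: prod.distinct_set_conv_list[symmetric] atLeast0LessThan)
  finally show ?thesis using rook_factorization[OF \<open>sorted b\<close>] by simp
qed

lemma prod_mset_linear_eq_imp_eq:
  fixes A B :: "int multiset"
  assumes "\<And>x. (\<Prod>a\<in>#A. x - a) = (\<Prod>a\<in>#B. x - a)"
  shows "A = B"
proof -
  define P where "P M = (\<Prod>a\<in>#M. [:- a, 1:])" for M :: "int multiset"
  have poly_P: "poly (P M) x = (\<Prod>a\<in>#M. x - a)" for M x
    unfolding P_def by (simp add: poly_prod_mset)
  have "P A = P B" using assms by (simp add: poly_eq_poly_eq_iff[symmetric] fun_eq_iff poly_P)
  then show ?thesis
  proof (induction A arbitrary: B)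
    case empty
    show ?case
    proof (rule ccontr)
      assume "{#} \<noteq> B"
      then obtain b where "b \<in># B" by (metis multiset_nonemptyE)
      then have "poly (P B) b = 0" unfolding poly_P by (auto simp: prod_mset_zero_iff)
      then show False using empty.prems poly_P[of "{#}"] by simp
    qed
  next
    case (add a A)
    have "poly (P B) a = 0" using poly_P[of "add_mset a A"] add.prems by simp
    then have "a \<in># B" unfolding poly_P by (auto simp: prod_mset_zero_iff)
    then have B: "B = add_mset a (B - {#a#})" by simp
    have "[:- a, 1:] * P A = [:- a, 1:] * P (B - {#a#})"
      using add.prems unfolding P_def by (subst (asm) B) simp
    moreover have "[:- a, 1:] \<noteq> 0" by simp
    ultimately have "P A = P (B - {#a#})" by (meson mult_left_cancel)
    then show ?case using add.IH B by metis
  qed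
qed

lemma falling_expansion_unique:
  fixes a c :: "nat \<Rightarrow> int"
  assumes eq: "\<And>x. (\<Sum>k\<le>n. a k * falling x (n - k)) = (\<Sum>k\<le>n. c k * falling x (n - k))"
    and "k \<le> n"
  shows "a k = c k"
proof -
  have "a (n - j) = c (n - j)" if "j \<le> n" for j
    using that
  proof (induction j rule: less_induct)
    case (less j)
    define d where "d k = (a k - c k) * falling (int j) (n - k)" for k
    have "(\<Sum>k\<le>n. d k) = 0" unfolding d_def using eq[of "int j"] by (simp add: algebra_simps sum_subtractf)
    moreover have "d k = 0" if "k \<in> {..n} - {n - j}" for k
    proof (cases "n - k < j")
      case True
      then show ?thesis using less.IH[of "n - k"] that unfolding d_def by auto
    qed (use that falling_eq_0 in \<open>auto simp: d_def\<close>)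
    ultimately have "d (n - j) = 0"
      using sum.remove[of "{..n}" "n - j" d] sum.neutral[of "{..n} - {n - j}" d] by simp
    then show ?case using less.prems falling_neq_0[of j] unfolding d_def by simp
  qed
  from this[of "n - k"] show ?thesis using \<open>k \<le> n\<close> by simp
qed

theorem rook_equiv_iff_mset_root_vector:
  assumes "sorted b" "sorted c" and "length b = length c"
  shows "rook_equiv b c \<longleftrightarrow> mset (root_vector b) = mset (root_vector c)"
proof
  assume "rook_equiv b c"
  then have "rook_falling_sum b x = rook_falling_sum c x" for x
    unfolding rook_falling_sum_def rook_equiv_def using assms(3) by simp
  then show "mset (root_vector b) = mset (root_vector c)"
    using prod_mset_linear_eq_imp_eq rook_factorization_root_vector assms(1,2) by metis
next
  assume "mset (root_vector b) = mset (root_vector c)"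
  then have "rook_falling_sum b x = rook_falling_sum c x" for x
    using rook_factorization_root_vector assms(1,2) by metis
  then have "int (rook_num k b) = int (rook_num k c)" if "k \<le> length b" for k
    using falling_expansion_unique[OF _ that, of "\<lambda>k. int (rook_num k b)" "\<lambda>k. int (rook_num k c)"]
    unfolding rook_falling_sum_def assms(3) by blast
  then show "rook_equiv b c"
    unfolding rook_equiv_def using assms(3) by (metis not_le of_nat_eq_iff rook_num_gt_length)
qed

section \<open>Boards with non-negative root vectors as root sequences\<close>

lemma length_root_vector [simp]: "length (root_vector d) = length d"
  unfolding root_vector_def by simp

lemma root_vector_nth: "k < length d \<Longrightarrow> root_vector d ! k = int k - int (d ! k)"
  unfolding root_vector_def by simp

lemma length_pad: "length c \<le> N \<Longrightarrow> length (pad N c) = N"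
  unfolding pad_def by simp

lemma pad_length_self: "pad (length b) b = b"
  unfolding pad_def by simp

lemma sorted_pad: "sorted c \<Longrightarrow> sorted (pad N c)"
  unfolding pad_def by (auto simp: sorted_append)

lemma pad_pad: "length c \<le> N \<Longrightarrow> N \<le> n \<Longrightarrow> pad n c = replicate (n - N) 0 @ pad N c"
  unfolding pad_def by (simp add: replicate_add[symmetric])

lemma root_vector_pad:
  assumes "length b \<le> N"
  shows "root_vector (pad N b) = map int [0..<N - length b] @ map (\<lambda>z. z + int (N - length b)) (root_vector b)"
  using assms by (intro nth_equalityI) (auto simp: root_vector_nth length_pad pad_def nth_append)

lemma root_seq_root_vector:
  assumes "sorted d" and nonneg: "\<forall>z\<in>set (root_vector d). 0 \<le> z"
  shows "root_seq (root_vector d)"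
  unfolding root_seq_def
proof (intro conjI allI impI)
  assume "root_vector d \<noteq> []"
  then have "0 < length d" by (metis length_greater_0_conv length_root_vector)
  then have "root_vector d ! 0 = - int (d ! 0)" by (simp add: root_vector_nth)
  moreover have "0 \<le> root_vector d ! 0" using nonneg \<open>0 < length d\<close> by (metis nth_mem length_root_vector)
  ultimately show "root_vector d ! 0 = 0" by simp
next
  fix k assume "Suc k < length (root_vector d)"
  then show "root_vector d ! Suc k \<le> root_vector d ! k + 1"
    using sorted_nth_mono[OF \<open>sorted d\<close>, of k "Suc k"] by (simp add: root_vector_nth)
qed (use nonneg in blast)

definition board_of_roots :: "int list \<Rightarrow> nat list" where
  "board_of_roots z = map (\<lambda>i. nat (int i - z ! i)) [0..<length z]"

definition canonical_board_of_roots :: "int list \<Rightarrow> nat list" where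
  "canonical_board_of_roots z = dropWhile (\<lambda>x. x = 0) (board_of_roots z)"

lemma board_of_roots:
  assumes z: "root_seq z"
  shows "length (board_of_roots z) = length z" "sorted (board_of_roots z)" "root_vector (board_of_roots z) = z"
proof -
  show l: "length (board_of_roots z) = length z" unfolding board_of_roots_def by simp
  have nth: "int (board_of_roots z ! k) = int k - z ! k" if "k < length z" for k
    unfolding board_of_roots_def using root_seq_le_index[OF z that] that by simp
  show "root_vector (board_of_roots z) = z"
    by (rule nth_equalityI) (use l nth in \<open>auto simp: root_vector_nth\<close>)
  have "int (board_of_roots z ! i) \<le> int (board_of_roots z ! (i + d))" if "i + d < length z" for i d
    using that
  proof (induction d)
    case (Suc d)
    then show ?case using root_seq_step[OF z, of "i + d"] nth[of "i + d"] nth[of "Suc (i + d)"] by simp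
  qed simp
  then show "sorted (board_of_roots z)"
    unfolding sorted_iff_nth_mono l by (metis le_add_diff_inverse of_nat_le_iff)
qed

lemma canonical_board_of_roots:
  assumes z: "root_seq z"
  shows "canonical_board (canonical_board_of_roots z)" "length (canonical_board_of_roots z) \<le> length z"
    "pad (length z) (canonical_board_of_roots z) = board_of_roots z"
proof -
  define d where "d = board_of_roots z"
  have l: "length d = length z" and s: "sorted d" using board_of_roots[OF z] unfolding d_def by auto
  have sorted: "sorted (dropWhile (\<lambda>x. x = 0) d)"
    using s by (simp add: dropWhile_eq_drop)
  have "0 \<notin> set (dropWhile (\<lambda>x. x = 0) d)"
  proof
    assume zero: "0 \<in> set (dropWhile (\<lambda>x. x = 0) d)"
    then have ne: "dropWhile (\<lambda>x. x = 0) d \<noteq> []" by (metis empty_iff empty_set)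
    then have "hd (dropWhile (\<lambda>x. x = 0) d) \<noteq> 0" using hd_dropWhile by blast
    moreover have "hd (dropWhile (\<lambda>x. x = 0) d) \<le> 0"
      using sorted zero ne by (metis list.collapse set_ConsD sorted_simps(2) order_refl)
    ultimately show False by simp
  qed
  then show "canonical_board (canonical_board_of_roots z)"
    using sorted unfolding canonical_board_def ferrers_def canonical_board_of_roots_def d_def by simp
  show "length (canonical_board_of_roots z) \<le> length z"
    unfolding canonical_board_of_roots_def d_def[symmetric] using l by (simp add: dropWhile_eq_drop)
  have "takeWhile (\<lambda>x. x = 0) d = replicate (length (takeWhile (\<lambda>x. x = 0) d)) 0"
    by (rule replicate_length_same[symmetric]) (auto dest: set_takeWhileD)
  moreover have "length (takeWhile (\<lambda>x. x = 0) d) = length z - length (dropWhile (\<lambda>x. x = 0) d)"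
    using l by (metis add_diff_cancel_right' length_append takeWhile_dropWhile_id)
  ultimately show "pad (length z) (canonical_board_of_roots z) = board_of_roots z"
    unfolding pad_def canonical_board_of_roots_def d_def[symmetric] by (metis takeWhile_dropWhile_id)
qed

lemma root_vector_canonical_board_of_roots:
  "root_seq z \<Longrightarrow> root_vector (pad (length z) (canonical_board_of_roots z)) = z"
  using canonical_board_of_roots(3) board_of_roots(3) by simp

lemma canonical_board_of_roots_root_vector:
  assumes c: "canonical_board c" and "length c \<le> N"
  shows "canonical_board_of_roots (root_vector (pad N c)) = c"
proof -
  have "board_of_roots (root_vector (pad N c)) = pad N c"
    using \<open>length c \<le> N\<close> by (intro nth_equalityI) (auto simp: board_of_roots_def length_pad root_vector_nth)
  moreover have "dropWhile (\<lambda>x. x = 0) c = c"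
    using c unfolding canonical_board_def by (cases c) auto
  moreover have "dropWhile (\<lambda>x. x = 0) (replicate (N - length c) 0 @ c) = dropWhile (\<lambda>x. x = 0) c"
    by (rule dropWhile_append2) simp
  ultimately show ?thesis unfolding canonical_board_of_roots_def pad_def by simp
qed

lemma count_root_vector_pad_below:
  assumes nonneg: "\<forall>z\<in>set (root_vector b). 0 \<le> z" and "length b \<le> N" and v: "0 \<le> v" "v < int (N - length b)"
  shows "count (mset (root_vector (pad N b))) v = 1"
proof -
  define m where "m = N - length b"
  have "mset (map int [0..<m]) = mset_set (set (map int [0..<m]))"
    by (rule mset_set_set[symmetric]) (simp add: distinct_map)
  moreover have "v \<in> set (map int [0..<m])"
    using v unfolding m_def by (auto simp: image_iff intro!: bexI[of _ "nat v"])
  ultimately have "count (mset (map int [0..<m])) v = 1" by simp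
  moreover have "count (mset (map (\<lambda>z. z + int m) (root_vector b))) v = 0"
    using nonneg v unfolding m_def by (auto simp: count_eq_zero_iff)
  ultimately show ?thesis unfolding root_vector_pad[OF \<open>length b \<le> N\<close>] m_def by simp
qed

text \<open>A value v = z ! l < l would repeat the entry v already found at index v.\<close>

lemma root_seq_identity_prefix:
  assumes z: "root_seq z" and "m \<le> length z" and once: "\<And>v. 0 \<le> v \<Longrightarrow> v < int m \<Longrightarrow> count (mset z) v = 1"
  shows "l < m \<Longrightarrow> z ! l = int l"
proof (induction l rule: less_induct)
  case (less l)
  have l: "l < length z" using less.prems \<open>m \<le> length z\<close> by simp
  show ?case
  proof (rule ccontr)
    assume "z ! l \<noteq> int l"
    then have "z ! l < int l" using root_seq_le_index[OF z l] by simp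
    moreover have "0 \<le> z ! l" using root_seq_nonneg[OF z] l by simp
    ultimately have "nat (z ! l) < l" "z ! nat (z ! l) = z ! l" using less.IH[of "nat (z ! l)"] less.prems by auto
    then have "2 \<le> count (mset z) (z ! l)" using two_le_count_mset[of "nat (z ! l)" l z] l by simp
    then show False using once[of "z ! l"] \<open>0 \<le> z ! l\<close> \<open>z ! l < int l\<close> less.prems by simp
  qed
qed

lemma length_le_if_same_roots:
  assumes b: "sorted b" "\<forall>z\<in>set (root_vector b). 0 \<le> z" and c: "canonical_board c"
    and N: "length b \<le> N" "length c \<le> N"
    and roots: "mset (root_vector (pad N c)) = mset (root_vector (pad N b))"
  shows "length c \<le> length b"
proof (rule ccontr)
  assume "\<not> length c \<le> length b"
  define z where "z = root_vector (pad N c)"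
  have "set z = set (root_vector (pad N b))" unfolding z_def using roots by (metis set_mset_mset)
  then have "\<forall>x\<in>set z. 0 \<le> x" unfolding root_vector_pad[OF N(1)] using b(2) by auto
  moreover have "sorted c" using c unfolding canonical_board_def ferrers_def by simp
  ultimately have "root_seq z" unfolding z_def using root_seq_root_vector sorted_pad by blast
  have "length z = N" unfolding z_def using N(2) by (simp add: length_pad)
  define p where "p = N - length c"
  have "p < N - length b" unfolding p_def using \<open>\<not> length c \<le> length b\<close> N by simp
  then have "z ! p = int p"
    using root_seq_identity_prefix[OF \<open>root_seq z\<close>, of "N - length b"] count_root_vector_pad_below[OF b(2) N(1)]
      \<open>length z = N\<close> unfolding z_def roots by simp
  moreover have "0 < length c" using \<open>\<not> length c \<le> length b\<close> by linarith
  then have "c ! 0 \<in> set c" by (rule nth_mem)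
  then have "c ! 0 \<noteq> 0" using c unfolding canonical_board_def by metis
  then have "z ! p < int p"
    using \<open>p < N - length b\<close> N(2) unfolding z_def p_def by (simp add: root_vector_nth length_pad pad_def nth_append)
  ultimately show False by simp
qed

lemma rook_vertices_iff:
  assumes b: "sorted b" "\<forall>z\<in>set (root_vector b). 0 \<le> z"
  shows "c \<in> rook_vertices b \<longleftrightarrow>
    canonical_board c \<and> length c \<le> length b \<and> mset (root_vector (pad (length b) c)) = mset (root_vector b)"
proof
  assume "c \<in> rook_vertices b"
  then have c: "canonical_board c" "sorted c" and "rook_equiv b c"
    unfolding rook_vertices_def canonical_board_def ferrers_def by auto
  define N where "N = max (length b) (length c)"
  have N: "length b \<le> N" "length c \<le> N" unfolding N_def by auto
  have "rook_equiv (pad N b) (pad N c)" using \<open>rook_equiv b c\<close> by (simp add: rook_equiv_pad)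
  then have roots: "mset (root_vector (pad N b)) = mset (root_vector (pad N c))"
    using rook_equiv_iff_mset_root_vector[OF sorted_pad[OF b(1)] sorted_pad[OF c(2)]] N by (simp add: length_pad)
  have "length c \<le> length b" by (rule length_le_if_same_roots[OF b c(1) N roots[symmetric]])
  then show "canonical_board c \<and> length c \<le> length b \<and> mset (root_vector (pad (length b) c)) = mset (root_vector b)"
    using c roots unfolding N_def by (simp add: pad_length_self)
next
  assume h: "canonical_board c \<and> length c \<le> length b \<and> mset (root_vector (pad (length b) c)) = mset (root_vector b)"
  then have "sorted c" unfolding canonical_board_def ferrers_def by simp
  then have "rook_equiv (pad (length b) b) (pad (length b) c) \<longleftrightarrow>
      mset (root_vector (pad (length b) b)) = mset (root_vector (pad (length b) c))"
    using h by (intro rook_equiv_iff_mset_root_vector sorted_pad b(1)) (simp_all add: length_pad)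
  then have "rook_equiv b c" using h rook_equiv_pad[of "length b" b c] unfolding pad_length_self by simp
  then show "c \<in> rook_vertices b" using h unfolding rook_vertices_def by simp
qed

section \<open>Edges of the rook equivalence graph as transpositions of roots\<close>

definition column_transfer :: "nat list \<Rightarrow> nat list \<Rightarrow> bool" where
  "column_transfer d1 d2 \<longleftrightarrow> length d1 = length d2 \<and>
     (\<exists>i j k. i < length d1 \<and> j < length d1 \<and> i \<noteq> j \<and> k > 0 \<and>
        d1 ! i = d2 ! i + k \<and> d1 ! j + k = d2 ! j \<and>
        (\<forall>l<length d1. l \<noteq> i \<and> l \<noteq> j \<longrightarrow> d1 ! l = d2 ! l))"

lemma rook_edge_iff_column_transfer:
  "rook_edge c1 c2 \<longleftrightarrow>
     column_transfer (pad (max (length c1) (length c2)) c1) (pad (max (length c1) (length c2)) c2)"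
  unfolding rook_edge_def column_transfer_def Let_def by (simp add: length_pad)

lemma column_transfer_replicate_0:
  assumes "length d1 = length d2"
  shows "column_transfer (replicate m 0 @ d1) (replicate m 0 @ d2) \<longleftrightarrow> column_transfer d1 d2"
proof
  assume "column_transfer (replicate m 0 @ d1) (replicate m 0 @ d2)"
  then obtain i j k where h: "i < m + length d1" "j < m + length d1" "i \<noteq> j" "k > 0"
    "(replicate m 0 @ d1) ! i = (replicate m 0 @ d2) ! i + k"
    "(replicate m 0 @ d1) ! j + k = (replicate m 0 @ d2) ! j"
    "\<forall>l<m + length d1. l \<noteq> i \<and> l \<noteq> j \<longrightarrow> (replicate m 0 @ d1) ! l = (replicate m 0 @ d2) ! l"
    unfolding column_transfer_def by auto
  have "m \<le> i" "m \<le> j" using h(4-6) by (auto simp: nth_append split: if_splits)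
  then show "column_transfer d1 d2"
    unfolding column_transfer_def using assms h
    by (intro conjI exI[of _ "i - m"] exI[of _ "j - m"] exI[of _ k])
      (auto simp: nth_append dest: spec[of _ "_ + m"])
next
  assume "column_transfer d1 d2"
  then obtain i j k where h: "i < length d1" "j < length d1" "i \<noteq> j" "k > 0" "d1 ! i = d2 ! i + k"
    "d1 ! j + k = d2 ! j" "\<forall>l<length d1. l \<noteq> i \<and> l \<noteq> j \<longrightarrow> d1 ! l = d2 ! l"
    unfolding column_transfer_def by blast
  have "(replicate m 0 @ d1) ! l = (replicate m 0 @ d2) ! l"
    if "l < m + length d1" "l \<noteq> m + i" "l \<noteq> m + j" for l
  proof (cases "l < m")
    case False
    then have "l - m < length d1" "l - m \<noteq> i" "l - m \<noteq> j" using that by auto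
    then show ?thesis using h(7) False assms by (simp add: nth_append)
  qed (use assms in \<open>simp add: nth_append\<close>)
  then show "column_transfer (replicate m 0 @ d1) (replicate m 0 @ d2)"
    unfolding column_transfer_def using assms h
    by (intro conjI exI[of _ "m + i"] exI[of _ "m + j"] exI[of _ k]) (auto simp: nth_append)
qed

text \<open>The sum of squares changes by 2k(z ! i - z ! j + k).\<close>

lemma mset_shift_pair_eq_imp:
  fixes z :: "int list"
  assumes ij: "i < length z" "j < length z" "i \<noteq> j" and "0 < k"
    and eq: "mset (z[i := z ! i + k, j := z ! j - k]) = mset z"
  shows "z ! j = z ! i + k"
proof -
  define sq where "sq x = x * x" for x :: int
  have "sum_list (map sq (z[i := z ! i + k, j := z ! j - k])) = sum_list (map sq z)"
    using eq by (metis mset_map sum_mset_sum_list)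
  moreover have "sum_list (map sq (z[i := z ! i + k, j := z ! j - k])) =
      sum_list (map sq z) + sq (z ! i + k) - sq (z ! i) + sq (z ! j - k) - sq (z ! j)"
    using ij by (simp add: map_update sum_list_list_update nth_list_update)
  ultimately have "2 * k * (z ! i - z ! j + k) = 0" unfolding sq_def by (simp add: algebra_simps)
  then show ?thesis using \<open>0 < k\<close> by simp
qed

lemma column_transfer_imp_transposed:
  assumes "column_transfer d1 d2" and roots: "mset (root_vector d1) = mset (root_vector d2)"
  shows "transposed (root_vector d1) (root_vector d2)"
proof -
  obtain i j k where h: "i < length d1" "j < length d1" "i \<noteq> j" "k > 0" "d1 ! i = d2 ! i + k"
    "d1 ! j + k = d2 ! j" "\<forall>l<length d1. l \<noteq> i \<and> l \<noteq> j \<longrightarrow> d1 ! l = d2 ! l" "length d1 = length d2"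
    using assms(1) unfolding column_transfer_def by blast
  define z where "z = root_vector d1"
  have z2: "root_vector d2 = z[i := z ! i + int k, j := z ! j - int k]"
    using h unfolding z_def by (intro nth_equalityI) (auto simp: root_vector_nth nth_list_update)
  then have "z ! j = z ! i + int k"
    using mset_shift_pair_eq_imp[of i z j "int k"] h roots unfolding z_def by simp
  then have "root_vector d2 = z[i := z ! j, j := z ! i]" "z ! i \<noteq> z ! j" using z2 h(4) by auto
  then show ?thesis unfolding transposed_def z_def using h by auto
qed

lemma transposed_imp_column_transfer:
  assumes "length d1 = length d2" and "transposed (root_vector d1) (root_vector d2)"
  shows "column_transfer d1 d2"
proof -
  obtain i j where ij: "i < length d1" "j < length d1" "root_vector d1 ! i < root_vector d1 ! j"
    "root_vector d2 = (root_vector d1)[i := root_vector d1 ! j, j := root_vector d1 ! i]"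
    using assms(2) unfolding transposed_def
    by (metis length_root_vector linorder_neqE list_update_swap)
  define k where "k = nat (root_vector d1 ! j - root_vector d1 ! i)"
  have "i \<noteq> j" using ij(3) by auto
  have d: "int (d2 ! l) = int (d1 ! l) - (if l = i then int k else if l = j then - int k else 0)"
    if "l < length d1" for l
  proof -
    have "root_vector d2 ! l =
        (if l = i then root_vector d1 ! j else if l = j then root_vector d1 ! i else root_vector d1 ! l)"
      using ij(4) that ij(1,2) \<open>i \<noteq> j\<close> by (simp add: nth_list_update)
    then show ?thesis using that ij(1-3) assms(1) unfolding k_def by (auto simp: root_vector_nth)
  qed
  have "0 < k" using ij(3) by (simp add: k_def)
  moreover have "d1 ! i = d2 ! i + k" using d[OF ij(1)] by simp
  moreover have "d1 ! j + k = d2 ! j" using d[OF ij(2)] \<open>i \<noteq> j\<close> by simp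
  moreover have "\<forall>l<length d1. l \<noteq> i \<and> l \<noteq> j \<longrightarrow> d1 ! l = d2 ! l" using d by fastforce
  ultimately show ?thesis unfolding column_transfer_def using assms(1) ij(1,2) \<open>i \<noteq> j\<close> by blast
qed

lemma rook_edge_iff_transposed:
  assumes "length c1 \<le> n" "length c2 \<le> n"
    and roots: "mset (root_vector (pad n c1)) = mset (root_vector (pad n c2))"
  shows "rook_edge c1 c2 \<longleftrightarrow> transposed (root_vector (pad n c1)) (root_vector (pad n c2))"
proof -
  define N where "N = max (length c1) (length c2)"
  have N: "length c1 \<le> N" "length c2 \<le> N" "N \<le> n" unfolding N_def using assms(1,2) by auto
  have "rook_edge c1 c2 \<longleftrightarrow> column_transfer (pad N c1) (pad N c2)"
    unfolding rook_edge_iff_column_transfer N_def ..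
  also have "\<dots> \<longleftrightarrow> column_transfer (pad n c1) (pad n c2)"
    unfolding pad_pad[OF N(1,3)] pad_pad[OF N(2,3)] using N by (simp add: column_transfer_replicate_0 length_pad)
  also have "\<dots> \<longleftrightarrow> transposed (root_vector (pad n c1)) (root_vector (pad n c2))"
    using column_transfer_imp_transposed[OF _ roots] transposed_imp_column_transfer assms(1,2)
    by (metis length_pad)
  finally show ?thesis .
qed

lemma rook_graph_connected_iff_root_swaps:
  assumes b: "sorted b" "\<forall>z\<in>set (root_vector b). 0 \<le> z"
  defines "V \<equiv> mset (root_vector b)"
  shows "rook_graph_connected b \<longleftrightarrow>
    (\<forall>z1\<in>root_seqs V. \<forall>z2\<in>root_seqs V. (root_swap V)\<^sup>*\<^sup>* z1 z2)"
proof -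
  let ?F = "\<lambda>c. root_vector (pad (length b) c)"
  have vertex: "length c \<le> length b \<and> root_seq (?F c) \<and> mset (?F c) = V \<and> canonical_board_of_roots (?F c) = c"
    if "c \<in> rook_vertices b" for c
  proof -
    have c: "canonical_board c" "length c \<le> length b" "mset (?F c) = V"
      using that rook_vertices_iff[OF b] unfolding V_def by auto
    then have "\<forall>x\<in>set (?F c). 0 \<le> x" using b(2) unfolding V_def by (metis set_mset_mset)
    then show ?thesis using c root_seq_root_vector[OF sorted_pad] canonical_board_of_roots_root_vector
      unfolding canonical_board_def ferrers_def by auto
  qed
  have root_seq: "canonical_board_of_roots z \<in> rook_vertices b \<and> ?F (canonical_board_of_roots z) = z"
    if "root_seq z" "mset z = V" for z
    using that rook_vertices_iff[OF b] canonical_board_of_roots[OF that(1)]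
      root_vector_canonical_board_of_roots[OF that(1)] mset_eq_length[of z "root_vector b"]
    unfolding V_def by auto
  have edge: "rook_edge c1 c2 \<longleftrightarrow> root_swap V (?F c1) (?F c2)"
    if "c1 \<in> rook_vertices b" "c2 \<in> rook_vertices b" for c1 c2
    using vertex[OF that(1)] vertex[OF that(2)] rook_edge_iff_transposed[of c1 "length b" c2]
    unfolding root_swap_def by auto
  show ?thesis
    unfolding rook_graph_connected_def
    by (rule connected_iff_connected_image[where F = ?F and G = canonical_board_of_roots])
      (use vertex root_seq edge in \<open>auto simp: root_swap_def root_seqs_def\<close>)
qed

lemma root_count_eq_count: "root_count b i = count (mset (root_vector b)) i"
proof -
  have "(\<lambda>z. z = i) = (\<lambda>z. i = z)" by auto
  then show ?thesis unfolding root_count_def by (simp add: count_mset count_list_eq_length_filter)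
qed

theorem theorem10:
  fixes b :: "nat list" and M :: int
  assumes "ferrers b"
    and "b \<noteq> []"
    and "\<forall>z\<in>set (root_vector b). z \<ge> 0"
    and "M = Max (set (root_vector b))"
  shows "rook_graph_connected b \<longleftrightarrow>
    (\<forall>i::int. 0 \<le> i \<and> i < M - 1 \<longrightarrow>
       root_count b i > 1 \<longrightarrow> root_count b (i + 1) > 1)"
proof -
  have b: "sorted b" "\<forall>z\<in>set (root_vector b). 0 \<le> z" using assms(1,3) unfolding ferrers_def by auto
  have "rook_graph_connected b \<longleftrightarrow> repeats_propagate (mset (root_vector b))"
    unfolding rook_graph_connected_iff_root_swaps[OF b]
    using root_swaps_connected_iff[OF root_seq_root_vector[OF b]] by simp
  then show ?thesis unfolding repeats_propagate_def assms(4) root_count_eq_count by simp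
qed

end
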